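(* Let $\Gamma$ be a finite vertex-transitive graph with $\mathrm{diam}(\Gamma)\in\{1,2\}$. Then $\Gamma$ admits no extended irregular dominating set.
   Context: Let $\Gamma=(V,E)$ be a finite simple undirected graph with graph distance $d$; $\mathrm{diam}(\Gamma)$ is the largest distance between two vertices. A vertex $v$ carrying a non-negative integer label $\ell$ dominates (covers) exactly the vertices $u$ with $d(u,v)=\ell$; a vertex labeled $0$ dominates only itself. An extended irregular dominating set is a set $S\subseteq V$ together with a labeling $\lambda:S\to\mathbb{Z}_{\ge 0}$ with distinct labels on distinct vertices, such that every vertex of $V$ is dominated by at least one vertex of $S$; it is assumed that some vertex of $S$ has label $0$. *)

theory Defs
  imports Main "HOL-Library.Extended_Nat"
begin

definition simple_graph :: "'a set \<Rightarrow> ('a \<Rightarrow> 'a \<Rightarrow> bool) \<Rightarrow> bool" where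
  "simple_graph V E \<longleftrightarrow> finite V \<and> (\<forall>u v. E u v \<longrightarrow> u \<in> V \<and> v \<in> V)
     \<and> (\<forall>u v. E u v \<longrightarrow> E v u) \<and> (\<forall>u. \<not> E u u)"

definition walk_of_len :: "('a \<Rightarrow> 'a \<Rightarrow> bool) \<Rightarrow> 'a \<Rightarrow> 'a \<Rightarrow> nat \<Rightarrow> bool" where
  "walk_of_len E u v n \<longleftrightarrow> (\<exists>xs. length xs = Suc n \<and> hd xs = u \<and> last xs = v
     \<and> (\<forall>i < n. E (xs ! i) (xs ! Suc i)))"

definition gdist :: "('a \<Rightarrow> 'a \<Rightarrow> bool) \<Rightarrow> 'a \<Rightarrow> 'a \<Rightarrow> enat" where
  "gdist E u v = (if \<exists>n. walk_of_len E u v n then enat (LEAST n. walk_of_len E u v n) else \<infinity>)"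

definition diam :: "'a set \<Rightarrow> ('a \<Rightarrow> 'a \<Rightarrow> bool) \<Rightarrow> enat" where
  "diam V E = Sup {gdist E u v | u v. u \<in> V \<and> v \<in> V}"

definition graph_automorphism :: "'a set \<Rightarrow> ('a \<Rightarrow> 'a \<Rightarrow> bool) \<Rightarrow> ('a \<Rightarrow> 'a) \<Rightarrow> bool" where
  "graph_automorphism V E f \<longleftrightarrow> bij_betw f V V \<and> (\<forall>x\<in>V. \<forall>y\<in>V. E x y \<longleftrightarrow> E (f x) (f y))"

definition vertex_transitive :: "'a set \<Rightarrow> ('a \<Rightarrow> 'a \<Rightarrow> bool) \<Rightarrow> bool" where
  "vertex_transitive V E \<longleftrightarrow> (\<forall>u\<in>V. \<forall>v\<in>V. \<exists>f. graph_automorphism V E f \<and> f u = v)"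

definition dominates :: "('a \<Rightarrow> 'a \<Rightarrow> bool) \<Rightarrow> 'a \<Rightarrow> nat \<Rightarrow> 'a \<Rightarrow> bool" where
  "dominates E v l u \<longleftrightarrow> gdist E u v = enat l"

definition ext_irregular_dominating :: "'a set \<Rightarrow> ('a \<Rightarrow> 'a \<Rightarrow> bool) \<Rightarrow> 'a set \<Rightarrow> ('a \<Rightarrow> nat) \<Rightarrow> bool" where
  "ext_irregular_dominating V E S lam \<longleftrightarrow> S \<subseteq> V \<and> inj_on lam S
     \<and> (\<forall>u\<in>V. \<exists>v\<in>S. dominates E v (lam v) u) \<and> (\<exists>v\<in>S. lam v = 0)"

end

theory Submission
  imports Defs
begin

text \<open>
  Only symmetry of the adjacency and diameter at most 2 matter.
  Every dominator has label at most 2, and a vertex with nonzero label is dominated neither by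
  itself nor by the vertex labelled 0, so it is dominated by another vertex with label 1 or 2.
  Starting from any vertex other than the one labelled 0, this produces dominators
  \<open>y\<close> of \<open>x\<close> and \<open>x\<close> of \<open>y\<close> with labels \<open>{1, 2}\<close>; by symmetry of the distance
  both labels equal \<open>d(x, y)\<close>, contradicting distinctness of labels.
\<close>

lemma walk_of_len_rev:
  assumes sym: "\<And>a b. E a b \<Longrightarrow> E b a" and "walk_of_len E u v n"
  shows "walk_of_len E v u n"
proof -
  obtain xs where xs: "length xs = Suc n" "hd xs = u" "last xs = v"
    and steps: "\<forall>i < n. E (xs ! i) (xs ! Suc i)"
    using assms(2) unfolding walk_of_len_def by blast
  have "E (rev xs ! i) (rev xs ! Suc i)" if "i < n" for i
  proof -
    have "E (xs ! (n - Suc i)) (xs ! Suc (n - Suc i))"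
      using steps that by simp
    moreover have "Suc (n - Suc i) = n - i" using that by simp
    ultimately show ?thesis
      using that xs(1) by (simp add: rev_nth sym)
  qed
  moreover have "xs \<noteq> []" using xs(1) by auto
  ultimately show ?thesis
    unfolding walk_of_len_def using xs by (intro exI[of _ "rev xs"]) (simp add: hd_rev last_rev)
qed

lemma gdist_sym:
  assumes "\<And>a b. E a b \<Longrightarrow> E b a"
  shows "gdist E u v = gdist E v u"
proof -
  have "walk_of_len E u v n \<longleftrightarrow> walk_of_len E v u n" for n
    using walk_of_len_rev[of E] assms by blast
  then show ?thesis unfolding gdist_def by presburger
qed

lemma gdist_eq_0_iff: "gdist E u v = 0 \<longleftrightarrow> u = v"
proof
  assume "gdist E u v = 0"
  then have "walk_of_len E u v 0"
    unfolding gdist_def zero_enat_def by (metis LeastI enat.distinct(1) enat.inject)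
  then obtain xs where "length xs = 1" "hd xs = u" "last xs = v"
    unfolding walk_of_len_def by auto
  then show "u = v" by (cases xs) auto
next
  assume "u = v"
  have "walk_of_len E u u 0"
    unfolding walk_of_len_def by (intro exI[of _ "[u]"]) simp
  then show "gdist E u v = 0"
    unfolding gdist_def zero_enat_def using \<open>u = v\<close> by (auto intro: Least_eq_0)
qed

lemma gdist_le_diam: "u \<in> V \<Longrightarrow> v \<in> V \<Longrightarrow> gdist E u v \<le> diam V E"
  unfolding diam_def by (rule Sup_upper) blast

lemma diam_eq_0_iff: "diam V E = 0 \<longleftrightarrow> (\<forall>u\<in>V. \<forall>v\<in>V. u = v)"
proof
  assume "diam V E = 0"
  then show "\<forall>u\<in>V. \<forall>v\<in>V. u = v"
    using gdist_le_diam[of _ V _ E] gdist_eq_0_iff by (metis le_zero_eq)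
next
  assume "\<forall>u\<in>V. \<forall>v\<in>V. u = v"
  then have "{gdist E u v | u v. u \<in> V \<and> v \<in> V} \<subseteq> {0}"
    using gdist_eq_0_iff[of E] by blast
  then have "diam V E \<le> Sup {0}"
    unfolding diam_def by (rule Sup_subset_mono)
  then show "diam V E = 0" by simp
qed

lemma dominates_self_iff: "dominates E v l v \<longleftrightarrow> l = 0"
  unfolding dominates_def using gdist_eq_0_iff[of E v v] by (auto simp: zero_enat_def)

lemma dominates_0_iff: "dominates E v 0 u \<longleftrightarrow> u = v"
  unfolding dominates_def using gdist_eq_0_iff[of E u v] by (simp add: zero_enat_def)

lemma ext_irregular_dominating_label_le_diam:
  assumes "ext_irregular_dominating V E S lam" and "u \<in> V"
  obtains v where "v \<in> S" "dominates E v (lam v) u" "enat (lam v) \<le> diam V E"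
proof -
  obtain v where v: "v \<in> S" "dominates E v (lam v) u"
    using assms unfolding ext_irregular_dominating_def by blast
  then have "v \<in> V" using assms(1) unfolding ext_irregular_dominating_def by blast
  then have "enat (lam v) \<le> diam V E"
    using v(2) gdist_le_diam[OF assms(2)] unfolding dominates_def by metis
  with v that show ?thesis by blast
qed

lemma ext_irregular_dominating_nonzero_dominator:
  assumes eids: "ext_irregular_dominating V E S lam" and "diam V E \<le> 2"
    and "u \<in> V" and nonzero: "u \<in> S \<Longrightarrow> lam u \<noteq> 0"
  obtains v where "v \<in> S" "v \<noteq> u" "dominates E v (lam v) u" "lam v \<in> {1, 2}"
proof -
  obtain v where v: "v \<in> S" "dominates E v (lam v) u" "enat (lam v) \<le> diam V E"
    using ext_irregular_dominating_label_le_diam[OF eids \<open>u \<in> V\<close>] .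
  have "lam v \<noteq> 0"
    using v(1,2) nonzero dominates_0_iff by metis
  moreover have "enat (lam v) \<le> 2"
    using v(3) \<open>diam V E \<le> 2\<close> by (rule order_trans)
  then have "lam v \<le> 2" by (simp add: numeral_eq_enat)
  moreover have "v \<noteq> u"
    using v(2) \<open>lam v \<noteq> 0\<close> dominates_self_iff by metis
  ultimately show ?thesis using that v(1,2) by fastforce
qed

theorem no_ext_irregular_dominating_if_diam_le_2:
  assumes sym: "\<And>a b. E a b \<Longrightarrow> E b a" and "diam V E \<le> 2"
    and "u \<in> V" "u' \<in> V" "u \<noteq> u'"
  shows "\<not> ext_irregular_dominating V E S lam"
proof
  assume eids: "ext_irregular_dominating V E S lam"
  then have SV: "S \<subseteq> V" and inj: "inj_on lam S" and "\<exists>v\<in>S. lam v = 0"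
    unfolding ext_irregular_dominating_def by blast+
  then obtain v0 where v0: "v0 \<in> S" "lam v0 = 0" by blast
  obtain w where w: "w \<in> V" "w \<noteq> v0" using assms(3-5) by blast
  have "w \<in> S \<Longrightarrow> lam w \<noteq> 0" using inj v0 w(2) by (metis inj_onD)
  then obtain x where x: "x \<in> S" "lam x \<in> {1, 2}"
    using ext_irregular_dominating_nonzero_dominator[OF eids \<open>diam V E \<le> 2\<close> w(1)] by metis
  have "x \<in> V" "x \<in> S \<Longrightarrow> lam x \<noteq> 0" using x SV by auto
  then obtain y where y: "y \<in> S" "y \<noteq> x" "dominates E y (lam y) x" "lam y \<in> {1, 2}"
    using ext_irregular_dominating_nonzero_dominator[OF eids \<open>diam V E \<le> 2\<close>] by metis
  have "y \<in> V" "y \<in> S \<Longrightarrow> lam y \<noteq> 0" using y SV by auto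
  then obtain z where z: "z \<in> S" "z \<noteq> y" "dominates E z (lam z) y" "lam z \<in> {1, 2}"
    using ext_irregular_dominating_nonzero_dominator[OF eids \<open>diam V E \<le> 2\<close>] by metis
  have "lam x \<noteq> lam y" "lam z \<noteq> lam y"
    using inj x(1) y(1,2) z(1,2) by (metis inj_onD)+
  then have "lam z = lam x" using x(2) y(4) z(4) by auto
  then have "z = x" using inj x(1) z(1) by (metis inj_onD)
  then have "gdist E x y = lam y" "gdist E y x = lam x"
    using y(3) z(3) unfolding dominates_def by simp_all
  then have "lam x = lam y" using gdist_sym[of E x y, OF sym] by simp
  with \<open>lam x \<noteq> lam y\<close> show False ..
qed

theorem proposition3p1:
  fixes V :: "'a set" and E :: "'a \<Rightarrow> 'a \<Rightarrow> bool"
  assumes "simple_graph V E"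
    and "vertex_transitive V E"
    and "diam V E \<in> {1, 2}"
  shows "\<not> (\<exists>S lam. ext_irregular_dominating V E S lam)"
proof -
  have sym: "\<And>a b. E a b \<Longrightarrow> E b a"
    using assms(1) unfolding simple_graph_def by blast
  have "diam V E \<le> 2" "diam V E \<noteq> 0"
    using assms(3) by (auto simp: one_enat_def numeral_eq_enat zero_enat_def)
  then obtain u u' where "u \<in> V" "u' \<in> V" "u \<noteq> u'"
    using diam_eq_0_iff by blast
  then show ?thesis
    using no_ext_irregular_dominating_if_diam_le_2[OF sym \<open>diam V E \<le> 2\<close>] by blast
qed

end
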